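(* Let $n\geq 3$ and let $\rho: B_n \rightarrow GL_n(\mathbb{C})$ be a non-trivial homogeneous $2$-local representation of $B_n$. Let $\rho': SM_n \rightarrow M_n(\mathbb{C})$ be a non-trivial homogeneous $2$-local extension of $\rho$ to $SM_n$. Then $\rho'$ is equivalent to one of the following three representations, where for each $1\le i\le n-1$ we write $D_i(X)$ for the block diagonal matrix $\mathrm{diag}(I_{i-1},X,I_{n-i-1})$ with $X\in M_2(\mathbb{C})$: (1) $\rho'_1$ with $\rho'_1(\sigma_i)=\rho_1(\sigma_i)$ and $\rho'_1(\tau_i)=D_i\begin{pmatrix} 1-(1-a)(1-t) & \frac{1-a}{c}(1-t)\\ c(1-t) & t\end{pmatrix}$, where $a,c,t\in\mathbb{C}$, $a\neq 0$, $c\neq 0$; (2) $\rho'_2$ with $\rho'_2(\sigma_i)=\rho_2(\sigma_i)$ and $\rho'_2(\tau_i)=D_i\begin{pmatrix} x & \frac{1-d}{c}(1-x)\\ c(1-x) & 1-(1-d)(1-x)\end{pmatrix}$, where $c,d,x\in\mathbb{C}$, $c\neq 0$, $d\neq 0$; (3) $\rho'_3$ with $\rho'_3(\sigma_i)=\rho_3(\sigma_i)$ and $\rho'_3(\tau_i)=D_i\begin{pmatrix} x & y\\ \frac{cy}{b} & x\end{pmatrix}$, where $b,c,x,y\in\mathbb{C}$, $b\neq 0$, $c\neq 0$. Here $\rho_1(\sigma_i)=D_i\begin{pmatrix} a&\frac{1-a}{c}\\ c&0\end{pmatrix}$ with $c\neq 0$, $a\neq 1$; $\rho_2(\sigma_i)=D_i\begin{pmatrix}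 0&\frac{1-d}{c}\\ c&d\end{pmatrix}$ with $c\neq0$, $d\neq 1$; and $\rho_3(\sigma_i)=D_i\begin{pmatrix} 0&b\\ c&0\end{pmatrix}$ with $bc\neq 0$ (for all $1\le i\le n-1$). Moreover, if $\rho'(\tau_i)$ is invertible for all $1\leq i\leq n-1$, then $\rho'$ is a representation of the singular braid group $SB_n$.
   Context: The braid group $B_n$ has generators $\sigma_1,\dots,\sigma_{n-1}$ with relations $\sigma_i\sigma_{i+1}\sigma_i=\sigma_{i+1}\sigma_i\sigma_{i+1}$ ($1\le i\le n-2$) and $\sigma_i\sigma_j=\sigma_j\sigma_i$ ($|i-j|\ge2$). The singular braid monoid $SM_n$ is the monoid generated by $\sigma_1^{\pm1},\dots,\sigma_{n-1}^{\pm1},\tau_1,\dots,\tau_{n-1}$ subject to $\sigma_i\sigma_i^{-1}=\sigma_i^{-1}\sigma_i=1$, the braid relations above, and the relations $\tau_i\tau_j=\tau_j\tau_i$ and $\tau_i\sigma_j=\sigma_j\tau_i$ for $|i-j|\ge 2$, $\tau_i\sigma_i=\sigma_i\tau_i$ for $1\le i\le n-1$, and $\sigma_i\sigma_{i+1}\tau_i=\tau_{i+1}\sigma_i\sigma_{i+1}$, $\sigma_{i+1}\sigma_i\tau_{i+1}=\tau_i\sigma_{i+1}\sigma_i$ for $1\le i\le n-2$. The singular braid group $SB_n$ is the group with generators $\sigma_i,\tau_i$ ($1\le i\le n-1$) and the same relations (into which $SM_n$ embeds). A representation of $SM_n$ is a monoid homomorphism into a matrix monoid $M_m(\mathbb{C})$.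 A representation $\rho:B_n\to GL_m(\mathbb{C})$ is homogeneous $k$-local, with $k=m-n+2$, if there is $M\in M_k(\mathbb{C})$ such that $\rho(\sigma_i)=\mathrm{diag}(I_{i-1},M,I_{n-i-1})$ for all $1\le i\le n-1$. A homogeneous $k$-local extension of such $\rho$ to $SM_n$ is a representation $\rho':SM_n\to M_m(\mathbb{C})$ with $\rho'(\sigma_i)=\rho(\sigma_i)$ and $\rho'(\tau_i)=\mathrm{diag}(I_{i-1},N,I_{n-i-1})$ for all $i$, for a single matrix $N\in M_k(\mathbb{C})$. "Non-trivial" means not sending every generator $\sigma_i$ to the identity. Two representations are equivalent if they are conjugate by a fixed invertible matrix. *)

theory Defs
  imports "Jordan_Normal_Form.Matrix" Complex_Main
begin

text \<open>Block-diagonal matrix diag(I_(i-1), X, I_(n-i-1)) of size n, for a 2x2 matrix X and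
  1 <= i <= n-1 (rows/columns are 0-indexed, so X occupies rows/columns i-1 and i).\<close>
definition blk :: "nat \<Rightarrow> nat \<Rightarrow> complex mat \<Rightarrow> complex mat" where
  "blk n i X = mat n n (\<lambda>(r,s).
     if i - 1 \<le> r \<and> r \<le> i \<and> i - 1 \<le> s \<and> s \<le> i then X $$ (r + 1 - i, s + 1 - i)
     else if r = s then 1 else 0)"

definition mat2 :: "complex \<Rightarrow> complex \<Rightarrow> complex \<Rightarrow> complex \<Rightarrow> complex mat" where
  "mat2 p q r s = mat_of_rows_list 2 [[p, q], [r, s]]"

text \<open>A representation of B_n into GL_m(C) is given (by the universal property of the
  presentation) by the images S i of the generators sigma_i, 1 <= i <= n-1: invertible
  m x m matrices satisfying the braid relations.\<close>
definition braid_rep :: "nat \<Rightarrow> nat \<Rightarrow> (nat \<Rightarrow> complex mat) \<Rightarrow> bool" where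
  "braid_rep n m S \<longleftrightarrow>
     (\<forall>i\<in>{1..n-1}. S i \<in> carrier_mat m m \<and> invertible_mat (S i)) \<and>
     (\<forall>i\<in>{1..n-2}. S i * S (i+1) * S i = S (i+1) * S i * S (i+1)) \<and>
     (\<forall>i\<in>{1..n-1}. \<forall>j\<in>{1..n-1}. (i + 2 \<le> j \<or> j + 2 \<le> i) \<longrightarrow> S i * S j = S j * S i)"

text \<open>A representation of the singular braid monoid SM_n into M_m(C) is given by the images
  S i of sigma_i and T i of tau_i (the image of sigma_i^(-1) is forced to be the inverse of
  S i by the relations sigma_i sigma_i^(-1) = sigma_i^(-1) sigma_i = 1).\<close>
definition sing_monoid_rep :: "nat \<Rightarrow> nat \<Rightarrow> (nat \<Rightarrow> complex mat) \<Rightarrow> (nat \<Rightarrow> complex mat) \<Rightarrow> bool" where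
  "sing_monoid_rep n m S T \<longleftrightarrow>
     braid_rep n m S \<and>
     (\<forall>i\<in>{1..n-1}. T i \<in> carrier_mat m m) \<and>
     (\<forall>i\<in>{1..n-1}. \<forall>j\<in>{1..n-1}. (i + 2 \<le> j \<or> j + 2 \<le> i) \<longrightarrow>
         T i * T j = T j * T i \<and> T i * S j = S j * T i) \<and>
     (\<forall>i\<in>{1..n-1}. T i * S i = S i * T i) \<and>
     (\<forall>i\<in>{1..n-2}. S i * S (i+1) * T i = T (i+1) * S i * S (i+1) \<and>
                    S (i+1) * S i * T (i+1) = T i * S (i+1) * S i)"

definition sing_group_rep :: "nat \<Rightarrow> nat \<Rightarrow> (nat \<Rightarrow> complex mat) \<Rightarrow> (nat \<Rightarrow> complex mat) \<Rightarrow> bool" where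
  "sing_group_rep n m S T \<longleftrightarrow>
     sing_monoid_rep n m S T \<and> (\<forall>i\<in>{1..n-1}. invertible_mat (T i))"

definition homogeneous_2local :: "nat \<Rightarrow> (nat \<Rightarrow> complex mat) \<Rightarrow> bool" where
  "homogeneous_2local n S \<longleftrightarrow>
     (\<exists>M\<in>carrier_mat 2 2. \<forall>i\<in>{1..n-1}. S i = blk n i M)"

definition nontrivial :: "nat \<Rightarrow> (nat \<Rightarrow> complex mat) \<Rightarrow> bool" where
  "nontrivial n S \<longleftrightarrow> (\<exists>i\<in>{1..n-1}. S i \<noteq> 1\<^sub>m n)"

definition equiv_sm_rep :: "nat \<Rightarrow> (nat \<Rightarrow> complex mat) \<Rightarrow> (nat \<Rightarrow> complex mat)
    \<Rightarrow> (nat \<Rightarrow> complex mat) \<Rightarrow> (nat \<Rightarrow> complex mat) \<Rightarrow> bool" where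
  "equiv_sm_rep n S T S' T' \<longleftrightarrow>
     (\<exists>P\<in>carrier_mat n n. \<exists>Q\<in>carrier_mat n n. P * Q = 1\<^sub>m n \<and> Q * P = 1\<^sub>m n \<and>
        (\<forall>i\<in>{1..n-1}. S' i = P * S i * Q \<and> T' i = P * T i * Q))"

end

theory Submission
  imports Defs
begin

text \<open>
  Write \<open>\<sigma>\<^sub>i \<mapsto> diag(I, M, I)\<close> and \<open>\<tau>\<^sub>i \<mapsto> diag(I, N, I)\<close> with
  \<open>M = [[p, q], [r, s]]\<close> and \<open>N = [[x, y], [z, w]]\<close>. The generators with indices 1 and 2 act
  only on the first three coordinates, so the defining relations between them reduce to
  identities of \<open>3 \<times> 3\<close> matrices, i.e. to polynomial equations in the eight entries.
  The braid relation, together with the facts that the invertible matrix \<open>M\<close> has no zero row or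
  column and that \<open>M \<noteq> I\<close>, leaves three families: \<open>s = 0\<close> with \<open>qr = 1 - p\<close>,
  \<open>p = 0\<close> with \<open>qr = 1 - s\<close>, and the antidiagonal \<open>p = s = 0\<close>. In the first two the mixed
  relations \<open>\<sigma>\<^sub>1\<sigma>\<^sub>2\<tau>\<^sub>1 = \<tau>\<^sub>2\<sigma>\<^sub>1\<sigma>\<^sub>2\<close> and \<open>\<sigma>\<^sub>2\<sigma>\<^sub>1\<tau>\<^sub>2 = \<tau>\<^sub>1\<sigma>\<^sub>2\<sigma>\<^sub>1\<close> determine \<open>N\<close> up to one
  free entry, in the third the commutation \<open>\<tau>\<^sub>1\<sigma>\<^sub>1 = \<sigma>\<^sub>1\<tau>\<^sub>1\<close> does. So the representation is
  literally of one of the stated forms and the identity matrix witnesses the equivalence.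
  Invertible images of the \<open>\<tau>\<^sub>i\<close> make it a representation of \<open>SB\<^sub>n\<close>, whose relations are
  exactly those of \<open>SM\<^sub>n\<close>.
\<close>

definition pad_one :: "nat \<Rightarrow> nat \<Rightarrow> 'a::{zero,one} mat \<Rightarrow> 'a mat" where
  "pad_one k n A = four_block_mat A (0\<^sub>m k (n - k)) (0\<^sub>m (n - k) k) (1\<^sub>m (n - k))"

lemma pad_one_mult:
  fixes A B :: "'a::semiring_1 mat"
  assumes "A \<in> carrier_mat k k" "B \<in> carrier_mat k k"
  shows "pad_one k n A * pad_one k n B = pad_one k n (A * B)"
  unfolding pad_one_def using assms by (subst mult_four_block_mat) auto

lemma pad_one_eq_iff:
  fixes A B :: "'a::semiring_1 mat"
  assumes "A \<in> carrier_mat k k" "B \<in> carrier_mat k k"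
  shows "pad_one k n A = pad_one k n B \<longleftrightarrow> A = B"
proof
  assume eq: "pad_one k n A = pad_one k n B"
  show "A = B"
  proof (rule eq_matI)
    fix i j assume "i < dim_row B" "j < dim_col B"
    then show "A $$ (i, j) = B $$ (i, j)"
      using arg_cong[OF eq, of "\<lambda>C. C $$ (i, j)"] assms by (simp add: pad_one_def)
  qed (use assms in auto)
qed simp

lemma blk_dims: "dim_row (blk n i X) = n" "dim_col (blk n i X) = n"
  by (simp_all add: blk_def)

lemma blk_carrier: "blk n i X \<in> carrier_mat n n"
  by (intro carrier_matI) (simp_all add: blk_dims)

lemma blk_eq_pad_one:
  assumes "1 \<le> i" "i < k" "k \<le> n"
  shows "blk n i X = pad_one k n (blk k i X)"
  by (rule eq_matI) (use assms in \<open>auto simp: blk_def pad_one_def\<close>)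

lemma blk_one: "1 \<le> i \<Longrightarrow> blk n i (1\<^sub>m 2) = 1\<^sub>m n"
  by (rule eq_matI) (auto simp: blk_def)

lemma invertible_mat_obtain_inverse:
  fixes A :: "'a::semiring_1 mat"
  assumes "invertible_mat A"
  obtains B where "A * B = 1\<^sub>m (dim_row A)" "B * A = 1\<^sub>m (dim_row A)"
    "B \<in> carrier_mat (dim_row A) (dim_row A)"
proof -
  obtain B where AB: "A * B = 1\<^sub>m (dim_row A)" and BA: "B * A = 1\<^sub>m (dim_row B)"
    and sq: "dim_col A = dim_row A"
    using assms unfolding invertible_mat_def inverts_mat_def square_mat.simps by blast
  have "dim_row B = dim_row A"
    using BA sq by (metis index_mult_mat(3) index_one_mat(3))
  moreover have "dim_col B = dim_row A"
    using AB by (metis index_mult_mat(3) index_one_mat(3))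
  ultimately show thesis
    using that AB BA by auto
qed

lemma invertible_mat_row_nonzero:
  fixes A :: "'a::semiring_1 mat"
  assumes "invertible_mat A" "k < dim_row A"
  shows "\<exists>j<dim_col A. A $$ (k, j) \<noteq> 0"
proof (rule ccontr)
  assume "\<not> ?thesis"
  then have zero: "row A k = 0\<^sub>v (dim_col A)"
    using assms(2) by (intro eq_vecI) auto
  obtain B where AB: "A * B = 1\<^sub>m (dim_row A)" and B: "B \<in> carrier_mat (dim_row A) (dim_row A)"
    using invertible_mat_obtain_inverse[OF assms(1)] by blast
  have sq: "dim_col A = dim_row A"
    using assms(1) unfolding invertible_mat_def by simp
  then have "(A * B) $$ (k, k) = 0"
    using assms(2) zero B by simp
  with AB assms(2) show False by simp
qed

lemma invertible_mat_col_nonzero: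
  fixes A :: "'a::semiring_1 mat"
  assumes "invertible_mat A" "k < dim_col A"
  shows "\<exists>j<dim_row A. A $$ (j, k) \<noteq> 0"
proof (rule ccontr)
  assume "\<not> ?thesis"
  then have zero: "col A k = 0\<^sub>v (dim_row A)"
    using assms(2) by (intro eq_vecI) auto
  obtain B where BA: "B * A = 1\<^sub>m (dim_row A)" and B: "B \<in> carrier_mat (dim_row A) (dim_row A)"
    using invertible_mat_obtain_inverse[OF assms(1)] by blast
  have sq: "dim_col A = dim_row A"
    using assms(1) unfolding invertible_mat_def by simp
  then have "(B * A) $$ (k, k) = 0"
    using assms(2) zero B by simp
  with BA assms(2) sq show False by simp
qed

lemma mat2_index:
  "mat2 p q r s $$ (0, 0) = p" "mat2 p q r s $$ (0, 1) = q"
  "mat2 p q r s $$ (1, 0) = r" "mat2 p q r s $$ (1, 1) = s"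
  by (simp_all add: mat2_def mat_of_rows_list_def)

lemmas mat2_index_Suc [simp] = mat2_index[unfolded One_nat_def]

lemma mat2_cases:
  assumes "M \<in> carrier_mat 2 2"
  obtains p q r s where "M = mat2 p q r s"
proof
  show "M = mat2 (M $$ (0, 0)) (M $$ (0, 1)) (M $$ (1, 0)) (M $$ (1, 1))" (is "M = ?N")
  proof (rule eq_matI)
    fix i j assume "i < dim_row ?N" "j < dim_col ?N"
    then have "i = 0 \<or> i = 1" "j = 0 \<or> j = 1"
      by (auto simp: mat2_def mat_of_rows_list_def)
    then show "M $$ (i, j) = ?N $$ (i, j)"
      by (elim disjE) simp_all
  qed (use assms in \<open>simp_all add: mat2_def mat_of_rows_list_def\<close>)
qed

lemma mat2_one: "mat2 1 0 0 1 = 1\<^sub>m 2"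
  by (rule eq_matI) (auto simp: mat2_def mat_of_rows_list_def less_2_cases_iff)

lemma blk_1_index_row:
  "2 \<le> n \<Longrightarrow> k < 2 \<Longrightarrow> j < n \<Longrightarrow> blk n 1 X $$ (k, j) = (if j < 2 then X $$ (k, j) else 0)"
  by (auto simp: blk_def)

lemma blk_1_index_col:
  "2 \<le> n \<Longrightarrow> k < 2 \<Longrightarrow> j < n \<Longrightarrow> blk n 1 X $$ (j, k) = (if j < 2 then X $$ (j, k) else 0)"
  by (auto simp: blk_def)

lemma invertible_blk_1_nonzero_lines:
  assumes "invertible_mat (blk n 1 X)" "2 \<le> n" "k < 2"
  shows "\<exists>j<2. X $$ (k, j) \<noteq> 0" "\<exists>j<2. X $$ (j, k) \<noteq> 0"
proof -
  obtain j where j: "j < n" "blk n 1 X $$ (k, j) \<noteq> 0"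
    using invertible_mat_row_nonzero[OF assms(1), of k] assms(2,3) by (auto simp: blk_dims)
  with blk_1_index_row[OF assms(2,3) j(1)] show "\<exists>j<2. X $$ (k, j) \<noteq> 0"
    by (auto split: if_splits)
  obtain i where i: "i < n" "blk n 1 X $$ (i, k) \<noteq> 0"
    using invertible_mat_col_nonzero[OF assms(1), of k] assms(2,3) by (auto simp: blk_dims)
  with blk_1_index_col[OF assms(2,3) i(1)] show "\<exists>j<2. X $$ (j, k) \<noteq> 0"
    by (auto split: if_splits)
qed

lemma invertible_blk_1_mat2:
  assumes "invertible_mat (blk n 1 (mat2 p q r s))" "2 \<le> n"
  shows "p \<noteq> 0 \<or> q \<noteq> 0" "r \<noteq> 0 \<or> s \<noteq> 0" "p \<noteq> 0 \<or> r \<noteq> 0" "q \<noteq> 0 \<or> s \<noteq> 0"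
proof -
  have ex2: "(\<exists>j<2. P j) \<longleftrightarrow> P 0 \<or> P 1" for P :: "nat \<Rightarrow> bool"
    by (auto simp: less_2_cases_iff)
  note lines = invertible_blk_1_nonzero_lines[OF assms]
  show "p \<noteq> 0 \<or> q \<noteq> 0" "p \<noteq> 0 \<or> r \<noteq> 0"
    using lines[of 0] unfolding ex2 by simp_all
  show "r \<noteq> 0 \<or> s \<noteq> 0" "q \<noteq> 0 \<or> s \<noteq> 0"
    using lines[of 1] unfolding ex2 by simp_all
qed

lemma less_3_iff: "(i::nat) < 3 \<longleftrightarrow> i = 0 \<or> i = 1 \<or> i = 2"
  by auto

definition mat3 :: "'a \<Rightarrow> 'a \<Rightarrow> 'a \<Rightarrow> 'a \<Rightarrow> 'a \<Rightarrow> 'a \<Rightarrow> 'a \<Rightarrow> 'a \<Rightarrow> 'a \<Rightarrow> 'a mat" where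
  "mat3 a b c d e f g h k = mat_of_rows_list 3 [[a, b, c], [d, e, f], [g, h, k]]"

lemma mat3_dims [simp]: "dim_row (mat3 a b c d e f g h k) = 3" "dim_col (mat3 a b c d e f g h k) = 3"
  by (simp_all add: mat3_def mat_of_rows_list_def)

lemma mat3_mult:
  fixes a :: "'a::semiring_0"
  shows "mat3 a b c d e f g h k * mat3 a' b' c' d' e' f' g' h' k' =
    mat3 (a*a' + b*d' + c*g') (a*b' + b*e' + c*h') (a*c' + b*f' + c*k')
         (d*a' + e*d' + f*g') (d*b' + e*e' + f*h') (d*c' + e*f' + f*k')
         (g*a' + h*d' + k*g') (g*b' + h*e' + k*h') (g*c' + h*f' + k*k')"
    (is "?L = ?R")
proof (rule eq_matI)
  fix i j assume "i < dim_row ?R" "j < dim_col ?R"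
  then have "i = 0 \<or> i = 1 \<or> i = 2" "j = 0 \<or> j = 1 \<or> j = 2"
    by (simp_all add: less_3_iff)
  then show "?L $$ (i, j) = ?R $$ (i, j)"
    by (elim disjE)
      (simp_all add: mat3_def mat_of_rows_list_def scalar_prod_def row_def col_def eval_nat_numeral)
qed simp_all

lemma mat3_eq_iff:
  "mat3 a b c d e f g h k = mat3 a' b' c' d' e' f' g' h' k' \<longleftrightarrow>
    a = a' \<and> b = b' \<and> c = c' \<and> d = d' \<and> e = e' \<and> f = f' \<and> g = g' \<and> h = h' \<and> k = k'"
proof
  assume eq: "mat3 a b c d e f g h k = mat3 a' b' c' d' e' f' g' h' k'"
  have "mat3 a b c d e f g h k $$ (i, j) = mat3 a' b' c' d' e' f' g' h' k' $$ (i, j)" for i j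
    using eq by simp
  from this[of 0 0] this[of 0 1] this[of 0 2] this[of 1 0] this[of 1 1] this[of 1 2]
    this[of 2 0] this[of 2 1] this[of 2 2]
  show "a = a' \<and> b = b' \<and> c = c' \<and> d = d' \<and> e = e' \<and> f = f' \<and> g = g' \<and> h = h' \<and> k = k'"
    by (simp add: mat3_def mat_of_rows_list_def)
qed simp

lemma blk_3_1_mat2: "blk 3 1 (mat2 p q r s) = mat3 p q 0 r s 0 0 0 1"
proof (rule eq_matI)
  fix i j assume "i < dim_row (mat3 p q 0 r s 0 0 0 1)" "j < dim_col (mat3 p q 0 r s 0 0 0 1)"
  then have "i = 0 \<or> i = 1 \<or> i = 2" "j = 0 \<or> j = 1 \<or> j = 2"
    by (simp_all add: less_3_iff)
  then show "blk 3 1 (mat2 p q r s) $$ (i, j) = mat3 p q 0 r s 0 0 0 1 $$ (i, j)"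
    by (elim disjE) (simp_all add: blk_def mat3_def mat_of_rows_list_def)
qed (simp_all add: blk_def)

lemma blk_3_2_mat2: "blk 3 2 (mat2 p q r s) = mat3 1 0 0 0 p q 0 r s"
proof (rule eq_matI)
  fix i j assume "i < dim_row (mat3 1 0 0 0 p q 0 r s)" "j < dim_col (mat3 1 0 0 0 p q 0 r s)"
  then have "i = 0 \<or> i = 1 \<or> i = 2" "j = 0 \<or> j = 1 \<or> j = 2"
    by (simp_all add: less_3_iff)
  then show "blk 3 2 (mat2 p q r s) $$ (i, j) = mat3 1 0 0 0 p q 0 r s $$ (i, j)"
    by (elim disjE) (simp_all add: blk_def mat3_def mat_of_rows_list_def)
qed (simp_all add: blk_def)

lemma sing_monoid_rep_local_relations:
  assumes "3 \<le> n" "sing_monoid_rep n n S T"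
    and S: "\<forall>i\<in>{1..n-1}. S i = blk n i M" and T: "\<forall>i\<in>{1..n-1}. T i = blk n i N"
  shows "blk 3 1 M * blk 3 2 M * blk 3 1 M = blk 3 2 M * blk 3 1 M * blk 3 2 M"
    and "blk 3 1 N * blk 3 1 M = blk 3 1 M * blk 3 1 N"
    and "blk 3 1 M * blk 3 2 M * blk 3 1 N = blk 3 2 N * blk 3 1 M * blk 3 2 M"
    and "blk 3 2 M * blk 3 1 M * blk 3 2 N = blk 3 1 N * blk 3 2 M * blk 3 1 M"
proof -
  have i: "1 \<in> {1..n-1}" "2 \<in> {1..n-1}" "1 \<in> {1..n-2}"
    using assms(1) by auto
  have braid: "\<forall>i\<in>{1..n-2}. S i * S (i+1) * S i = S (i+1) * S i * S (i+1)"
    and comm: "\<forall>i\<in>{1..n-1}. T i * S i = S i * T i"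
    and mixed: "\<forall>i\<in>{1..n-2}. S i * S (i+1) * T i = T (i+1) * S i * S (i+1) \<and>
      S (i+1) * S i * T (i+1) = T i * S (i+1) * S i"
    using assms(2) unfolding sing_monoid_rep_def braid_rep_def by blast+
  have "S 1 * S (1+1) * S 1 = S (1+1) * S 1 * S (1+1)" "T 1 * S 1 = S 1 * T 1"
    "S 1 * S (1+1) * T 1 = T (1+1) * S 1 * S (1+1)" "S (1+1) * S 1 * T (1+1) = T 1 * S (1+1) * S 1"
    using braid[rule_format, OF i(3)] comm[rule_format, OF i(1)] mixed[rule_format, OF i(3)]
    by blast+
  moreover have "S 1 = blk n 1 M" "S 2 = blk n 2 M" "T 1 = blk n 1 N" "T 2 = blk n 2 N"
    using S T i(1,2) by blast+
  ultimately have rels: "blk n 1 M * blk n 2 M * blk n 1 M = blk n 2 M * blk n 1 M * blk n 2 M"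
    "blk n 1 N * blk n 1 M = blk n 1 M * blk n 1 N"
    "blk n 1 M * blk n 2 M * blk n 1 N = blk n 2 N * blk n 1 M * blk n 2 M"
    "blk n 2 M * blk n 1 M * blk n 2 N = blk n 1 N * blk n 2 M * blk n 1 M"
    unfolding one_add_one by simp_all
  have pad: "blk n 1 X = pad_one 3 n (blk 3 1 X)" "blk n 2 X = pad_one 3 n (blk 3 2 X)" for X
    using assms(1) by (simp_all add: blk_eq_pad_one)
  note reduce = pad_one_mult pad_one_eq_iff blk_carrier mult_carrier_mat[of _ 3 3 _ 3]
  show "blk 3 1 M * blk 3 2 M * blk 3 1 M = blk 3 2 M * blk 3 1 M * blk 3 2 M"
    using rels(1) unfolding pad by (simp add: reduce)
  show "blk 3 1 N * blk 3 1 M = blk 3 1 M * blk 3 1 N"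
    using rels(2) unfolding pad by (simp add: reduce)
  show "blk 3 1 M * blk 3 2 M * blk 3 1 N = blk 3 2 N * blk 3 1 M * blk 3 2 M"
    using rels(3) unfolding pad by (simp add: reduce)
  show "blk 3 2 M * blk 3 1 M * blk 3 2 N = blk 3 1 N * blk 3 2 M * blk 3 1 M"
    using rels(4) unfolding pad by (simp add: reduce)
qed

lemma braid_relation_mat2:
  assumes "blk 3 1 (mat2 p q r s) * blk 3 2 (mat2 p q r s) * blk 3 1 (mat2 p q r s) =
    blk 3 2 (mat2 p q r s) * blk 3 1 (mat2 p q r s) * blk 3 2 (mat2 p q r s)"
  shows "p * (p + q * r - 1) = 0" "p * q * s = 0" "p * r * s = 0" "p * s * (s - p) = 0"
    "s * (1 - q * r - s) = 0"
proof -
  note eqs = assms[unfolded blk_3_1_mat2 blk_3_2_mat2 mat3_mult mat3_eq_iff]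
  show "p * (p + q * r - 1) = 0" using eqs by (elim conjE) Groebner_Basis.algebra
  show "p * q * s = 0" using eqs by (elim conjE) Groebner_Basis.algebra
  show "p * r * s = 0" using eqs by (elim conjE) Groebner_Basis.algebra
  show "p * s * (s - p) = 0" using eqs by (elim conjE) Groebner_Basis.algebra
  show "s * (1 - q * r - s) = 0" using eqs by (elim conjE) Groebner_Basis.algebra
qed

lemma braid_mat2_solutions:
  fixes p q r s :: "'a::field"
  assumes "p * (p + q * r - 1) = 0" "p * q * s = 0" "p * r * s = 0" "p * s * (s - p) = 0"
    "s * (1 - q * r - s) = 0"
    and "p \<noteq> 0 \<or> q \<noteq> 0" "r \<noteq> 0 \<or> s \<noteq> 0" "p \<noteq> 0 \<or> r \<noteq> 0" "q \<noteq> 0 \<or> s \<noteq> 0"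
    and "\<not> (p = 1 \<and> q = 0 \<and> r = 0 \<and> s = 1)"
  shows "(s = 0 \<and> p \<noteq> 0 \<and> p \<noteq> 1 \<and> r \<noteq> 0 \<and> q = (1 - p) / r)
    \<or> (p = 0 \<and> s \<noteq> 0 \<and> s \<noteq> 1 \<and> r \<noteq> 0 \<and> q = (1 - s) / r)
    \<or> (p = 0 \<and> s = 0 \<and> q \<noteq> 0 \<and> r \<noteq> 0)"
proof (cases "p = 0"; cases "s = 0")
  assume "p = 0" "s \<noteq> 0"
  then have "1 - q * r - s = 0" "q \<noteq> 0" "r \<noteq> 0"
    using assms(5,6,8) by auto
  then have "s = 1 - q * r" "q \<noteq> 0" "r \<noteq> 0"
    by auto
  then show ?thesis
    using \<open>p = 0\<close> \<open>s \<noteq> 0\<close> by (auto simp: field_simps)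
next
  assume "p \<noteq> 0" "s = 0"
  then have "p + q * r - 1 = 0" "q \<noteq> 0" "r \<noteq> 0"
    using assms(1,7,9) by auto
  then have "p = 1 - q * r" "q \<noteq> 0" "r \<noteq> 0"
    by (auto simp: algebra_simps)
  then show ?thesis
    using \<open>p \<noteq> 0\<close> \<open>s = 0\<close> by (auto simp: field_simps)
next
  assume "p \<noteq> 0" "s \<noteq> 0"
  then have "q = 0" "r = 0" "s = p"
    using assms(2-4) by auto
  then have "p = 1"
    using assms(1) \<open>p \<noteq> 0\<close> by simp
  with \<open>q = 0\<close> \<open>r = 0\<close> \<open>s = p\<close> assms(10) show ?thesis
    by simp
qed (use assms(6,8) in auto)

lemma tau_solutions_lower_right_zero:
  assumes "p \<noteq> 0"
    and "blk 3 1 (mat2 p q r 0) * blk 3 2 (mat2 p q r 0) * blk 3 1 (mat2 x y z w) =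
      blk 3 2 (mat2 x y z w) * blk 3 1 (mat2 p q r 0) * blk 3 2 (mat2 p q r 0)"
    and "blk 3 2 (mat2 p q r 0) * blk 3 1 (mat2 p q r 0) * blk 3 2 (mat2 x y z w) =
      blk 3 1 (mat2 x y z w) * blk 3 2 (mat2 p q r 0) * blk 3 1 (mat2 p q r 0)"
  shows "x = 1 - q * r * (1 - w)" "y = q * (1 - w)" "z = r * (1 - w)"
proof -
  note eqs = assms(2,3)[unfolded blk_3_1_mat2 blk_3_2_mat2 mat3_mult mat3_eq_iff]
  have "p * (x + q * z - 1) = 0" "p * (y + q * w - q) = 0" "p * (z + w * r - r) = 0"
    using eqs by (elim conjE; Groebner_Basis.algebra)+
  then have "x + q * z - 1 = 0" "y + q * w - q = 0" "z + w * r - r = 0"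
    using assms(1) by simp_all
  then show "x = 1 - q * r * (1 - w)" "y = q * (1 - w)" "z = r * (1 - w)"
    by Groebner_Basis.algebra+
qed

lemma tau_solutions_upper_left_zero:
  assumes "s \<noteq> 0"
    and "blk 3 1 (mat2 0 q r s) * blk 3 2 (mat2 0 q r s) * blk 3 1 (mat2 x y z w) =
      blk 3 2 (mat2 x y z w) * blk 3 1 (mat2 0 q r s) * blk 3 2 (mat2 0 q r s)"
    and "blk 3 2 (mat2 0 q r s) * blk 3 1 (mat2 0 q r s) * blk 3 2 (mat2 x y z w) =
      blk 3 1 (mat2 x y z w) * blk 3 2 (mat2 0 q r s) * blk 3 1 (mat2 0 q r s)"
  shows "y = q * (1 - x)" "z = r * (1 - x)" "w = 1 - q * r * (1 - x)"
proof -
  note eqs = assms(2,3)[unfolded blk_3_1_mat2 blk_3_2_mat2 mat3_mult mat3_eq_iff]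
  have "s * (q - x * q - y) = 0" "s * (r * x + z - r) = 0" "s * (1 - z * q - w) = 0"
    using eqs by (elim conjE; Groebner_Basis.algebra)+
  then have "q - x * q - y = 0" "r * x + z - r = 0" "1 - z * q - w = 0"
    using assms(1) by simp_all
  then show "y = q * (1 - x)" "z = r * (1 - x)" "w = 1 - q * r * (1 - x)"
    by Groebner_Basis.algebra+
qed

lemma tau_solutions_antidiagonal:
  assumes "q \<noteq> 0"
    and "blk 3 1 (mat2 x y z w) * blk 3 1 (mat2 0 q r 0) = blk 3 1 (mat2 0 q r 0) * blk 3 1 (mat2 x y z w)"
  shows "w = x" "z = r * y / q"
proof -
  note eqs = assms(2)[unfolded blk_3_1_mat2 mat3_mult mat3_eq_iff]
  have "q * (x - w) = 0" "y * r = q * z"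
    using eqs by (elim conjE; Groebner_Basis.algebra)+
  then show "w = x" "z = r * y / q"
    using assms(1) by (simp_all add: field_simps)
qed

lemma homogeneous_pair_classification:
  assumes M: "M = mat2 p q r s" and N: "N = mat2 x y z w"
    and braid: "blk 3 1 M * blk 3 2 M * blk 3 1 M = blk 3 2 M * blk 3 1 M * blk 3 2 M"
    and comm: "blk 3 1 N * blk 3 1 M = blk 3 1 M * blk 3 1 N"
    and mixed: "blk 3 1 M * blk 3 2 M * blk 3 1 N = blk 3 2 N * blk 3 1 M * blk 3 2 M"
      "blk 3 2 M * blk 3 1 M * blk 3 2 N = blk 3 1 N * blk 3 2 M * blk 3 1 M"
    and lines: "p \<noteq> 0 \<or> q \<noteq> 0" "r \<noteq> 0 \<or> s \<noteq> 0" "p \<noteq> 0 \<or> r \<noteq> 0" "q \<noteq> 0 \<or> s \<noteq> 0"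
    and nontrivial: "M \<noteq> 1\<^sub>m 2"
  shows "(\<exists>a c t. a \<noteq> 0 \<and> a \<noteq> 1 \<and> c \<noteq> 0 \<and> M = mat2 a ((1 - a) / c) c 0 \<and>
            N = mat2 (1 - (1 - a) * (1 - t)) ((1 - a) / c * (1 - t)) (c * (1 - t)) t)
       \<or> (\<exists>c d t. c \<noteq> 0 \<and> d \<noteq> 0 \<and> d \<noteq> 1 \<and> M = mat2 0 ((1 - d) / c) c d \<and>
            N = mat2 t ((1 - d) / c * (1 - t)) (c * (1 - t)) (1 - (1 - d) * (1 - t)))
       \<or> (\<exists>b c t u. b \<noteq> 0 \<and> c \<noteq> 0 \<and> M = mat2 0 b c 0 \<and> N = mat2 t u (c * u / b) t)"
proof -
  have "\<not> (p = 1 \<and> q = 0 \<and> r = 0 \<and> s = 1)"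
    using nontrivial M mat2_one by auto
  with braid_mat2_solutions[OF braid_relation_mat2[OF braid[unfolded M]] lines]
  consider (lower_right_zero) "s = 0" "p \<noteq> 0" "p \<noteq> 1" "r \<noteq> 0" "q = (1 - p) / r"
    | (upper_left_zero) "p = 0" "s \<noteq> 0" "s \<noteq> 1" "r \<noteq> 0" "q = (1 - s) / r"
    | (antidiagonal) "p = 0" "s = 0" "q \<noteq> 0" "r \<noteq> 0"
    by blast
  then show ?thesis
  proof cases
    case lower_right_zero
    then have "x = 1 - (1 - p) * (1 - w)" "y = (1 - p) / r * (1 - w)" "z = r * (1 - w)"
      using tau_solutions_lower_right_zero[of p q r x y z w] mixed unfolding M N by simp_all
    then show ?thesis
      using lower_right_zero M N by blast
  next
    case upper_left_zero
    then have "y = (1 - s) / r * (1 - x)" "z = r * (1 - x)" "w = 1 - (1 - s) * (1 - x)"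
      using tau_solutions_upper_left_zero[of s q r x y z w] mixed unfolding M N by simp_all
    then show ?thesis
      using upper_left_zero M N by blast
  next
    case antidiagonal
    then have "w = x" "z = r * y / q"
      using tau_solutions_antidiagonal[of q x y z w r] comm unfolding M N by simp_all
    then show ?thesis
      using antidiagonal M N by blast
  qed
qed

lemma equiv_sm_rep_if_eq_on:
  assumes "\<forall>i\<in>{1..n-1}. S' i = S i \<and> T' i = T i"
    and "\<forall>i\<in>{1..n-1}. S i \<in> carrier_mat n n \<and> T i \<in> carrier_mat n n"
  shows "equiv_sm_rep n S T S' T'"
  unfolding equiv_sm_rep_def
  by (rule bexI[of _ "1\<^sub>m n"], rule bexI[of _ "1\<^sub>m n"]) (use assms in auto)

theorem theorem3p3:
  fixes n :: nat and S T :: "nat \<Rightarrow> complex mat"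
  assumes "n \<ge> 3"
    and "braid_rep n n S" and "homogeneous_2local n S" and "nontrivial n S"
    and "sing_monoid_rep n n S T" and "homogeneous_2local n T"
  shows "((\<exists>a c t. a \<noteq> 0 \<and> a \<noteq> 1 \<and> c \<noteq> 0 \<and>
            equiv_sm_rep n S T
              (\<lambda>i. blk n i (mat2 a ((1 - a) / c) c 0))
              (\<lambda>i. blk n i (mat2 (1 - (1 - a) * (1 - t)) ((1 - a) / c * (1 - t)) (c * (1 - t)) t)))
         \<or> (\<exists>c d x. c \<noteq> 0 \<and> d \<noteq> 0 \<and> d \<noteq> 1 \<and>
            equiv_sm_rep n S T
              (\<lambda>i. blk n i (mat2 0 ((1 - d) / c) c d))
              (\<lambda>i. blk n i (mat2 x ((1 - d) / c * (1 - x)) (c * (1 - x)) (1 - (1 - d) * (1 - x)))))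
         \<or> (\<exists>b c x y. b \<noteq> 0 \<and> c \<noteq> 0 \<and>
            equiv_sm_rep n S T
              (\<lambda>i. blk n i (mat2 0 b c 0))
              (\<lambda>i. blk n i (mat2 x y (c * y / b) x))))
       \<and> ((\<forall>i\<in>{1..n-1}. invertible_mat (T i)) \<longrightarrow> sing_group_rep n n S T)"
proof -
  obtain M where "M \<in> carrier_mat 2 2" and S: "\<forall>i\<in>{1..n-1}. S i = blk n i M"
    using assms(3) unfolding homogeneous_2local_def by blast
  then obtain p q r s where M: "M = mat2 p q r s"
    using mat2_cases by blast
  obtain N where "N \<in> carrier_mat 2 2" and T: "\<forall>i\<in>{1..n-1}. T i = blk n i N"
    using assms(6) unfolding homogeneous_2local_def by blast
  then obtain x y z w where N: "N = mat2 x y z w"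
    using mat2_cases by blast
  have "invertible_mat (blk n 1 M)"
    using assms(1,2) S unfolding braid_rep_def by auto
  then have lines: "p \<noteq> 0 \<or> q \<noteq> 0" "r \<noteq> 0 \<or> s \<noteq> 0" "p \<noteq> 0 \<or> r \<noteq> 0" "q \<noteq> 0 \<or> s \<noteq> 0"
    using invertible_blk_1_mat2[of n p q r s] assms(1) M by auto
  have "M \<noteq> 1\<^sub>m 2"
    using assms(4) S blk_one unfolding nontrivial_def by auto
  note forms = homogeneous_pair_classification[OF M N
      sing_monoid_rep_local_relations[OF assms(1,5) S T] lines this]
  have "equiv_sm_rep n S T (\<lambda>i. blk n i M) (\<lambda>i. blk n i N)"
    using S T by (intro equiv_sm_rep_if_eq_on) (auto simp: blk_carrier)
  moreover have "(\<forall>i\<in>{1..n-1}. invertible_mat (T i)) \<longrightarrow> sing_group_rep n n S T"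
    using assms(5) unfolding sing_group_rep_def by blast
  ultimately show ?thesis
    using forms by blast
qed

end
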